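(* Let $(G,<_X,k)$ be an instance of \textsc{One-Sided $k$-Planarity} with $G=(X\cup Y,E)$. If $G$ contains a vertex $v\in X$ with $\deg(v)>2k+2$ that has a leaf neighbor $y\in Y$, then $(G,<_X,k)$ is a YES-instance if and only if $(G-y,<_X,k)$ is a YES-instance.
   Context: A leaf is a vertex with exactly one neighbor. A 2-layer drawing of a bipartite graph $G=(X\cup Y,E)$ ($X\cap Y=\emptyset$, $E\subseteq X\times Y$) is a pair $(<_X,<_Y)$ of strict linear orders on $X$ and $Y$. Edges $\{x,y\},\{x',y'\}$ with $x\ne x'\in X$, $y\ne y'\in Y$ cross if $x<_Xx'$ and $y'<_Yy$. The drawing is $k$-planar if every edge crosses at most $k$ edges. \textsc{One-Sided $k$-Planarity}: given a bipartite graph $(X\cup Y,E)$, an integer $k\ge0$ and a linear order $<_X$ of $X$, decide whether there is a linear order $<_Y$ of $Y$ with $(<_X,<_Y)$ a 2-layer $k$-planar drawing; a YES-instance is one for which the answer is yes. *)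

theory Defs
  imports Main
begin

definition bip_graph :: "'a set \<Rightarrow> 'a set \<Rightarrow> ('a \<times> 'a) set \<Rightarrow> bool" where
  "bip_graph X Y E \<longleftrightarrow> finite X \<and> finite Y \<and> X \<inter> Y = {} \<and> E \<subseteq> X \<times> Y"

definition crosses :: "'a rel \<Rightarrow> 'a rel \<Rightarrow> ('a \<times> 'a) \<Rightarrow> ('a \<times> 'a) \<Rightarrow> bool" where
  "crosses ordX ordY e e' \<longleftrightarrow>
     ((fst e, fst e') \<in> ordX \<and> (snd e', snd e) \<in> ordY) \<or>
     ((fst e', fst e) \<in> ordX \<and> (snd e, snd e') \<in> ordY)"

definition k_planar :: "('a \<times> 'a) set \<Rightarrow> nat \<Rightarrow> 'a rel \<Rightarrow> 'a rel \<Rightarrow> bool" where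
  "k_planar E k ordX ordY \<longleftrightarrow>
     (\<forall>e\<in>E. card {e'\<in>E. crosses ordX ordY e e'} \<le> k)"

definition one_sided_k_planar :: "'a set \<Rightarrow> 'a set \<Rightarrow> ('a \<times> 'a) set \<Rightarrow> 'a rel \<Rightarrow> nat \<Rightarrow> bool" where
  "one_sided_k_planar X Y E ordX k \<longleftrightarrow>
     (\<exists>ordY. ordY \<subseteq> Y \<times> Y \<and> strict_linear_order_on Y ordY \<and> k_planar E k ordX ordY)"

definition degree :: "('a \<times> 'a) set \<Rightarrow> 'a \<Rightarrow> nat" where
  "degree E v = card ({y. (v, y) \<in> E} \<union> {x. (x, v) \<in> E})"

definition is_leaf :: "('a \<times> 'a) set \<Rightarrow> 'a \<Rightarrow> bool" where
  "is_leaf E v \<longleftrightarrow> degree E v = 1"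

end

theory Submission
  imports Defs
begin

text \<open>Deleting y obviously preserves k-planarity. Conversely, take a k-planar order of
  Y - {y} and let N be the other neighbours of v, |N| \<ge> 2k + 2. Insert y directly before
  the first vertex that has at most k elements of N to its right. An edge (x, z) crossing
  (v, y) with x to the right of v would have z before y, so more than k edges (v, b) with
  b \<in> N cross it; if x is to the left of v, then z lies after y, at most k elements of N
  lie to the right of z, hence at least k + 1 lie to its left, and again more than k edges
  cross (x, z). So (v, y) is uncrossed and the other crossing numbers do not change.\<close>

lemma crosses_sym: "crosses ordX ordY e e' \<longleftrightarrow> crosses ordX ordY e' e"
  unfolding crosses_def by blast

lemma crosses_irrefl: "irrefl ordX \<Longrightarrow> \<not> crosses ordX ordY e e"
  unfolding crosses_def irrefl_def by blast

lemma k_planar_mono: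
  assumes "k_planar E k ordX ordY" "finite E" "E' \<subseteq> E" "ordY' \<subseteq> ordY"
  shows "k_planar E' k ordX ordY'"
  unfolding k_planar_def
proof
  fix e assume "e \<in> E'"
  have "{e' \<in> E'. crosses ordX ordY' e e'} \<subseteq> {e' \<in> E. crosses ordX ordY e e'}"
    using assms(3,4) unfolding crosses_def by blast
  then have "card {e' \<in> E'. crosses ordX ordY' e e'} \<le> card {e' \<in> E. crosses ordX ordY e e'}"
    using assms(2) by (simp add: card_mono)
  also have "\<dots> \<le> k"
    using assms(1,3) \<open>e \<in> E'\<close> unfolding k_planar_def by blast
  finally show "card {e' \<in> E'. crosses ordX ordY' e e'} \<le> k" .
qed

lemma k_planar_cong_ordY:
  assumes "\<And>a b. a \<in> snd ` E \<Longrightarrow> b \<in> snd ` E \<Longrightarrow> (a, b) \<in> ordY \<longleftrightarrow> (a, b) \<in> ordY'"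
  shows "k_planar E k ordX ordY \<longleftrightarrow> k_planar E k ordX ordY'"
proof -
  have "crosses ordX ordY e e' \<longleftrightarrow> crosses ordX ordY' e e'" if "e \<in> E" "e' \<in> E" for e e'
    using that assms unfolding crosses_def by auto
  then show ?thesis
    unfolding k_planar_def by (metis (no_types, lifting) Collect_cong)
qed

lemma k_planar_insert_uncrossed:
  assumes "k_planar E k ordX ordY" "\<And>e. e \<in> insert e\<^sub>0 E \<Longrightarrow> \<not> crosses ordX ordY e\<^sub>0 e"
  shows "k_planar (insert e\<^sub>0 E) k ordX ordY"
  unfolding k_planar_def
proof
  fix e assume e: "e \<in> insert e\<^sub>0 E"
  show "card {e' \<in> insert e\<^sub>0 E. crosses ordX ordY e e'} \<le> k"
  proof (cases "e = e\<^sub>0")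
    case True
    then have "{e' \<in> insert e\<^sub>0 E. crosses ordX ordY e e'} = {}"
      using assms(2) by blast
    then show ?thesis by (metis card.empty zero_le)
  next
    case False
    with e have "e \<in> E" by simp
    moreover have "{e' \<in> insert e\<^sub>0 E. crosses ordX ordY e e'} = {e' \<in> E. crosses ordX ordY e e'}"
      using assms(2) e crosses_sym by blast
    ultimately show ?thesis using assms(1) unfolding k_planar_def by simp
  qed
qed

lemma card_crossing_star_le:
  assumes "k_planar E k ordX ordY" "finite E" "e \<in> E"
    and "B \<subseteq> {b. (v, b) \<in> E}" "\<And>b. b \<in> B \<Longrightarrow> crosses ordX ordY e (v, b)"
  shows "card B \<le> k"
proof -
  have "card B = card (Pair v ` B)"
    by (simp add: card_image inj_on_def)
  also have "\<dots> \<le> card {e' \<in> E. crosses ordX ordY e e'}"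
    using assms(2,4,5) by (intro card_mono) auto
  also have "\<dots> \<le> k"
    using assms(1,3) unfolding k_planar_def by blast
  finally show ?thesis .
qed

lemma strict_linear_order_on_restrict:
  assumes "strict_linear_order_on A r" "B \<subseteq> A"
  shows "strict_linear_order_on B (r \<inter> B \<times> B)"
  using assms unfolding strict_linear_order_on_def trans_def irrefl_def total_on_def by blast

lemma strict_linear_order_on_insert_cut:
  assumes slo: "strict_linear_order_on A R" and R: "R \<subseteq> A \<times> A" and "y \<notin> A" "D \<subseteq> A"
    and down: "\<And>a b. (a, b) \<in> R \<Longrightarrow> b \<in> D \<Longrightarrow> a \<in> D"
  shows "strict_linear_order_on (insert y A) (R \<union> D \<times> {y} \<union> {y} \<times> (A - D))"
proof -
  have R_trans: "(a, c) \<in> R" if "(a, b) \<in> R" "(b, c) \<in> R" for a b c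
    using slo that unfolding strict_linear_order_on_def trans_def by blast
  have R_total: "(a, b) \<in> R \<or> (b, a) \<in> R" if "a \<in> A" "b \<in> A" "a \<noteq> b" for a b
    using slo that unfolding strict_linear_order_on_def total_on_def by blast
  have D_before: "(a, c) \<in> R" if "a \<in> D" "c \<in> A - D" for a c
    using R_total[of a c] down[of c a] that \<open>D \<subseteq> A\<close> by blast
  have R_up: "b \<in> A - D" if "(a, b) \<in> R" "a \<in> A - D" for a b
    using down R that by blast
  show ?thesis
    using slo R \<open>y \<notin> A\<close> \<open>D \<subseteq> A\<close>
    unfolding strict_linear_order_on_def trans_def irrefl_def total_on_def
    by (auto dest: R_trans down R_up D_before)
qed

lemma one_sided_k_planar_mono:
  assumes "one_sided_k_planar X Y E ordX k" "finite E" "E' \<subseteq> E" "Y' \<subseteq> Y"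
  shows "one_sided_k_planar X Y' E' ordX k"
proof -
  obtain R where "strict_linear_order_on Y R" "k_planar E k ordX R"
    using assms(1) unfolding one_sided_k_planar_def by blast
  then have "strict_linear_order_on Y' (R \<inter> Y' \<times> Y')" "k_planar E' k ordX (R \<inter> Y' \<times> Y')"
    using assms(2-4) by (auto intro: strict_linear_order_on_restrict k_planar_mono)
  then show ?thesis
    unfolding one_sided_k_planar_def by blast
qed

lemma one_sided_k_planar_insert_leaf:
  assumes yes: "one_sided_k_planar X A E ordX k" and fin: "finite E" and "irrefl ordX"
    and "snd ` E \<subseteq> A" "y \<notin> A" and deg: "2 * k + 2 \<le> card {b. (v, b) \<in> E}"
  shows "one_sided_k_planar X (insert y A) (insert (v, y) E) ordX k"
proof -
  obtain R where R: "strict_linear_order_on A R" "R \<subseteq> A \<times> A" "k_planar E k ordX R"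
    using yes unfolding one_sided_k_planar_def by blast
  define N where "N = {b. (v, b) \<in> E}"
  define D where "D = {z \<in> A. k < card {b \<in> N. (z, b) \<in> R}}"
  define S where "S = R \<union> D \<times> {y} \<union> {y} \<times> (A - D)"
  have "N \<subseteq> snd ` E"
    unfolding N_def by force
  then have "finite N" "N \<subseteq> A"
    using fin \<open>snd ` E \<subseteq> A\<close> finite_subset by blast+
  have D_down: "a \<in> D" if "(a, b) \<in> R" "b \<in> D" for a b
  proof -
    have "{c \<in> N. (b, c) \<in> R} \<subseteq> {c \<in> N. (a, c) \<in> R}"
      using R(1) that(1) unfolding strict_linear_order_on_def trans_def by blast
    then have "card {c \<in> N. (b, c) \<in> R} \<le> card {c \<in> N. (a, c) \<in> R}"
      using \<open>finite N\<close> by (simp add: card_mono)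
    then show ?thesis
      using that R(2) unfolding D_def by auto
  qed
  have "strict_linear_order_on (insert y A) S"
    unfolding S_def using R(1,2) \<open>y \<notin> A\<close> D_down
    by (intro strict_linear_order_on_insert_cut) (auto simp: D_def)
  moreover have "S \<subseteq> insert y A \<times> insert y A"
    using R(2) unfolding S_def D_def by blast
  moreover have "k_planar E k ordX S"
    using R(3) \<open>snd ` E \<subseteq> A\<close> \<open>y \<notin> A\<close>
    by (subst k_planar_cong_ordY[where ordY' = R]) (auto simp: S_def)
  moreover have "\<not> crosses ordX S (v, y) e" if e_in: "e \<in> insert (v, y) E" for e
  proof (cases "e = (v, y)")
    case True
    then show ?thesis using crosses_irrefl \<open>irrefl ordX\<close> by blast
  next
    case False
    then obtain x z where e: "e = (x, z)" "(x, z) \<in> E"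
      using e_in by (cases e) auto
    then have "z \<in> A" using \<open>snd ` E \<subseteq> A\<close> by force
    have right_of_v: "z \<notin> D" if "(v, x) \<in> ordX"
    proof -
      have "card {b \<in> N. (z, b) \<in> R} \<le> k"
        using that by (intro card_crossing_star_le[OF R(3) fin e(2)]) (auto simp: N_def crosses_def)
      then show ?thesis unfolding D_def by simp
    qed
    have left_of_v: "z \<in> D" if "(x, v) \<in> ordX"
    proof -
      let ?L = "{b \<in> N. (b, z) \<in> R}" and ?R = "{b \<in> N. (z, b) \<in> R}"
      have "card ?L \<le> k"
        using that by (intro card_crossing_star_le[OF R(3) fin e(2)]) (auto simp: N_def crosses_def)
      have "N \<subseteq> insert z (?L \<union> ?R)"
        using R(1) \<open>N \<subseteq> A\<close> \<open>z \<in> A\<close> unfolding strict_linear_order_on_def total_on_def by blast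
      then have "card N \<le> card (insert z (?L \<union> ?R))"
        using \<open>finite N\<close> by (intro card_mono) auto
      also have "\<dots> \<le> Suc (card (?L \<union> ?R))"
        using \<open>finite N\<close> by (simp add: card_insert_if)
      also have "\<dots> \<le> Suc (card ?L + card ?R)"
        by (simp add: card_Un_le)
      finally show ?thesis
        using \<open>card ?L \<le> k\<close> deg \<open>z \<in> A\<close> unfolding D_def N_def by simp
    qed
    have "(z, y) \<in> S \<Longrightarrow> z \<in> D" "(y, z) \<in> S \<Longrightarrow> z \<notin> D"
      using R(2) \<open>y \<notin> A\<close> unfolding S_def D_def by blast+
    then show ?thesis
      using right_of_v left_of_v unfolding e(1) crosses_def by auto
  qed
  ultimately show ?thesis
    unfolding one_sided_k_planar_def using k_planar_insert_uncrossed[of E k ordX S] by blast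
qed

lemma bip_graph_finite_edges: "bip_graph X Y E \<Longrightarrow> finite E"
  unfolding bip_graph_def by (meson finite_SigmaI finite_subset)

lemma degree_left:
  assumes "bip_graph X Y E" "v \<in> X"
  shows "degree E v = card {b. (v, b) \<in> E}"
proof -
  have "{a. (a, v) \<in> E} = {}"
    using assms unfolding bip_graph_def by blast
  then show ?thesis unfolding degree_def by simp
qed

lemma degree_right:
  assumes "bip_graph X Y E" "y \<in> Y"
  shows "degree E y = card {a. (a, y) \<in> E}"
proof -
  have "{b. (y, b) \<in> E} = {}"
    using assms unfolding bip_graph_def by blast
  then show ?thesis unfolding degree_def by simp
qed

lemma is_leaf_right_neighbour:
  assumes "bip_graph X Y E" "y \<in> Y" "is_leaf E y" "(v, y) \<in> E"
  shows "{a. (a, y) \<in> E} = {v}"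
proof -
  have "card {a. (a, y) \<in> E} = 1"
    using assms(3) degree_right[OF assms(1,2)] unfolding is_leaf_def by simp
  then show ?thesis
    using assms(4) by (metis card_1_singletonE mem_Collect_eq singletonD)
qed

theorem lemma3p2:
  fixes X Y :: "'a set" and E :: "('a \<times> 'a) set" and ordX :: "'a rel" and k :: nat
    and v y :: 'a
  assumes "bip_graph X Y E"
    and "ordX \<subseteq> X \<times> X" and "strict_linear_order_on X ordX"
    and "v \<in> X" and "degree E v > 2 * k + 2"
    and "y \<in> Y" and "(v, y) \<in> E" and "is_leaf E y"
  shows "one_sided_k_planar X Y E ordX k \<longleftrightarrow>
         one_sided_k_planar X (Y - {y}) {e \<in> E. snd e \<noteq> y} ordX k"
proof
  show "one_sided_k_planar X (Y - {y}) {e \<in> E. snd e \<noteq> y} ordX k"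
    if "one_sided_k_planar X Y E ordX k"
    using that bip_graph_finite_edges[OF assms(1)] by (rule one_sided_k_planar_mono) auto
next
  define E' where "E' = {e \<in> E. snd e \<noteq> y}"
  assume "one_sided_k_planar X (Y - {y}) {e \<in> E. snd e \<noteq> y} ordX k"
  moreover have "finite E'" "snd ` E' \<subseteq> Y - {y}" "irrefl ordX"
    using assms(1,3) bip_graph_finite_edges[OF assms(1)]
    unfolding E'_def bip_graph_def strict_linear_order_on_def by auto
  moreover have "2 * k + 2 \<le> card {b. (v, b) \<in> E'}"
  proof -
    have "{b. (v, b) \<in> E'} = {b. (v, b) \<in> E} - {y}"
      unfolding E'_def by auto
    then show ?thesis
      using assms(5,7) degree_left[OF assms(1,4)] by (simp add: card_Diff_singleton_if)
  qed
  ultimately have "one_sided_k_planar X (insert y (Y - {y})) (insert (v, y) E') ordX k"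
    unfolding E'_def by (intro one_sided_k_planar_insert_leaf) auto
  moreover have "insert (v, y) E' = E"
    using is_leaf_right_neighbour[OF assms(1,6,8,7)] assms(7) unfolding E'_def by force
  ultimately show "one_sided_k_planar X Y E ordX k"
    using assms(6) by (simp add: insert_absorb)
qed

end
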